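(* Let $n\ge 2$, let $A\in\mathbb{R}^{n\times n}$ be symmetric, let $B^a\in\mathbb{R}^{n\times n}$ be skew-symmetric and $B^s\in\mathbb{R}^{n\times n}$ symmetric, and let $K\ge 1$ be an integer such that $(B^s,A,B^a)$ satisfies the inhomogeneous Kalman rank condition of order $K$. Then there exist nonnegative integers $\alpha,\beta$ and a constant $c>0$ such that for every $\widehat U\in\mathbb{C}^n$: (i) for every real $\xi$ with $|\xi|\ge 1$, $$\sum_{k=0}^{K}|\xi|^{-2k}\,\big|B^s(i\xi A+B^a)^k\widehat U\big|^2\;\ge\; c\,|\xi|^{-2\alpha}|\widehat U|^2;$$ (ii) for every real $\xi$ with $0<|\xi|\le 1$, $$\sum_{k=0}^{K}\big|B^s(i\xi A+B^a)^k\widehat U\big|^2\;\ge\; c\,|\xi|^{2\beta}|\widehat U|^2.$$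
   Context: $|\cdot|$ denotes the Hermitian norm on $\mathbb{C}^n$. Inhomogeneous Kalman rank condition of order $K$: for every real $\xi\neq 0$, the $(K+1)n\times n$ complex matrix obtained by stacking the blocks $B^s,\;B^s(i\xi A+B^a),\;B^s(i\xi A+B^a)^2,\;\dots,\;B^s(i\xi A+B^a)^K$ on top of each other has rank $n$. *)

theory Defs
  imports "HOL-Analysis.Analysis"
begin

definition cmat :: "real^'n^'n \<Rightarrow> complex^'n^'n" where
  "cmat M = (\<chi> i j. complex_of_real (M $ i $ j))"

primrec matpow :: "'a::comm_ring_1^'n^'n \<Rightarrow> nat \<Rightarrow> 'a^'n^'n" where
  "matpow M 0 = mat 1"
| "matpow M (Suc k) = M ** matpow M k"

definition symb :: "real^'n^'n \<Rightarrow> real^'n^'n \<Rightarrow> real \<Rightarrow> complex^'n^'n" where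
  "symb A Ba \<xi> = (\<chi> i j. \<i> * complex_of_real \<xi> * complex_of_real (A $ i $ j)) + cmat Ba"

text \<open>Rank of the stacked (K+1)n x n complex matrix with blocks Bs (i xi A + Ba)^k, k = 0..K,
  computed as the (row) rank: dimension of the complex span of all its rows
  (this is literally the library's row-rank definition of rank, applied to the stacked matrix).\<close>
definition stacked_rank :: "real^'n^'n \<Rightarrow> real^'n^'n \<Rightarrow> real^'n^'n \<Rightarrow> nat \<Rightarrow> real \<Rightarrow> nat" where
  "stacked_rank Bs A Ba K \<xi> =
     vec.dim {row j (cmat Bs ** matpow (symb A Ba \<xi>) k) | j k. k \<le> K}"

definition kalman_rank_condition :: "real^'n^'n \<Rightarrow> real^'n^'n \<Rightarrow> real^'n^'n \<Rightarrow> nat \<Rightarrow> bool" where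
  "kalman_rank_condition Bs A Ba K \<longleftrightarrow>
     (\<forall>\<xi>::real. \<xi> \<noteq> 0 \<longrightarrow> stacked_rank Bs A Ba K \<xi> = CARD('n))"

end

theory Submission
  imports Defs
begin

text \<open>
  Write \<open>B\<^sub>k(\<xi>) = B\<^sup>s (i \<xi> A + B\<^sup>a)\<^sup>k\<close>, a matrix with polynomial entries in \<open>\<xi>\<close>. For each choice
  \<open>\<sigma>\<close> of \<open>n\<close> rows of the stacked matrix, giving an \<open>n \<times> n\<close> minor \<open>N\<^sub>\<sigma>(\<xi>)\<close>, Cramer's rule
  bounds \<open>|det N\<^sub>\<sigma>(\<xi>)|\<^sup>2 |U|\<^sup>2\<close> by a polynomially bounded factor times
  \<open>\<Sum>\<^sub>k |B\<^sub>k(\<xi>) U|\<^sup>2\<close>. Summing over \<open>\<sigma>\<close> yields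
  \<open>D(\<xi>) |U|\<^sup>2 \<le> C max(1,|\<xi>|)\<^sup>e \<Sum>\<^sub>k |B\<^sub>k(\<xi>) U|\<^sup>2\<close> with the real polynomial
  \<open>D(\<xi>) = \<Sum>\<^sub>\<sigma> |det N\<^sub>\<sigma>(\<xi>)|\<^sup>2\<close>. The Kalman rank condition says exactly that
  \<open>D(\<xi>) > 0\<close> for \<open>\<xi> \<noteq> 0\<close>, so \<open>D(\<xi>) \<ge> c |\<xi>|\<^sup>m\<close> near \<open>0\<close> (split off the root at \<open>0\<close>) and
  \<open>D(\<xi>) \<ge> c\<close> for \<open>|\<xi>| \<ge> 1\<close> (the same argument for the reflected polynomial). Dividing
  gives both estimates.
\<close>

section \<open>Polynomial functions of a real variable\<close>

lemma polynomial_function_complex_iff: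
  fixes f :: "'a::real_normed_vector \<Rightarrow> complex"
  shows "polynomial_function f \<longleftrightarrow>
    real_polynomial_function (\<lambda>x. Re (f x)) \<and> real_polynomial_function (\<lambda>x. Im (f x))"
  by (simp add: polynomial_function_iff_Basis_inner Basis_complex_def)

lemma polynomial_function_complex_mult [intro]:
  fixes f g :: "'a::real_normed_vector \<Rightarrow> complex"
  assumes "polynomial_function f" "polynomial_function g"
  shows "polynomial_function (\<lambda>x. f x * g x)"
  using assms by (auto simp: polynomial_function_complex_iff)

lemma polynomial_function_complex_prod [intro]:
  fixes f :: "'a::real_normed_vector \<Rightarrow> 'i \<Rightarrow> complex"
  assumes "finite I" and "\<And>i. i \<in> I \<Longrightarrow> polynomial_function (\<lambda>x. f x i)"
  shows "polynomial_function (\<lambda>x. prod (f x) I)"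
  using assms by (induct I rule: finite_induct) auto

lemma real_polynomial_function_cmod_power2:
  fixes f :: "'a::real_normed_vector \<Rightarrow> complex"
  assumes "polynomial_function f"
  shows "real_polynomial_function (\<lambda>x. (cmod (f x))\<^sup>2)"
  using assms by (auto simp: polynomial_function_complex_iff cmod_power2)

lemma real_polynomial_function_imp_poly:
  fixes f :: "real \<Rightarrow> real"
  assumes "real_polynomial_function f"
  obtains p where "\<And>x. f x = poly p x"
proof -
  from assms have "\<exists>p. \<forall>x. f x = poly p x"
  proof induction
    case (linear f)
    then obtain c where "f = (\<lambda>x. x * c)" by (auto simp: real_bounded_linear)
    then have "\<forall>x. f x = poly [:0, c:] x" by (simp add: mult.commute)
    then show ?case ..
  next
    case (const c)
    have "\<forall>x. c = poly [:c:] x" by simp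
    then show ?case ..
  next
    case (add f g)
    then obtain p q where "\<forall>x. f x = poly p x" "\<forall>x. g x = poly q x" by blast
    then have "\<forall>x. f x + g x = poly (p + q) x" by simp
    then show ?case ..
  next
    case (mult f g)
    then obtain p q where "\<forall>x. f x = poly p x" "\<forall>x. g x = poly q x" by blast
    then have "\<forall>x. f x * g x = poly (p * q) x" by simp
    then show ?case ..
  qed
  with that show ?thesis by blast
qed

lemma polynomial_function_det:
  fixes M :: "'a::real_normed_vector \<Rightarrow> complex^'n^'n"
  assumes "\<And>i j. polynomial_function (\<lambda>x. M x $ i $ j)"
  shows "polynomial_function (\<lambda>x. det (M x))"
  unfolding det_def using assms
  by (intro polynomial_function_sum polynomial_function_complex_mult polynomial_function_complex_prod) auto

lemma polynomial_function_matrix_mult: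
  fixes M N :: "'a::real_normed_vector \<Rightarrow> complex^'n^'n"
  assumes "\<And>i j. polynomial_function (\<lambda>x. M x $ i $ j)"
    and "\<And>i j. polynomial_function (\<lambda>x. N x $ i $ j)"
  shows "polynomial_function (\<lambda>x. (M x ** N x) $ i $ j)"
  unfolding matrix_matrix_mult_def using assms
  by (auto intro!: polynomial_function_sum polynomial_function_complex_mult)

lemma polynomial_function_matpow:
  fixes M :: "'a::real_normed_vector \<Rightarrow> complex^'n^'n"
  assumes "\<And>i j. polynomial_function (\<lambda>x. M x $ i $ j)"
  shows "polynomial_function (\<lambda>x. matpow (M x) k $ i $ j)"
proof (induction k arbitrary: i j)
  case 0
  then show ?case by (simp add: mat_def)
next
  case (Suc k)
  then show ?case by (simp add: polynomial_function_matrix_mult assms)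
qed

section \<open>Growth and lower bounds of real polynomials\<close>

lemma poly_bounded_by_max_power:
  fixes p :: "real poly"
  obtains C d where "C \<ge> 1" "\<And>x. \<bar>poly p x\<bar> \<le> C * max 1 \<bar>x\<bar> ^ d"
proof
  define C where "C = 1 + (\<Sum>i\<le>degree p. \<bar>coeff p i\<bar>)"
  show "C \<ge> 1" unfolding C_def by (simp add: sum_nonneg)
  fix x :: real
  have "\<bar>poly p x\<bar> = \<bar>\<Sum>i\<le>degree p. coeff p i * x ^ i\<bar>" by (simp add: poly_altdef)
  also have "\<dots> \<le> (\<Sum>i\<le>degree p. \<bar>coeff p i\<bar> * max 1 \<bar>x\<bar> ^ degree p)"
  proof (rule order_trans[OF sum_abs sum_mono])
    fix i assume "i \<in> {..degree p}"
    then have "\<bar>x\<bar> ^ i \<le> max 1 \<bar>x\<bar> ^ degree p"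
      by (meson atMost_iff order_trans power_increasing power_mono abs_ge_zero
          max.cobounded1 max.cobounded2)
    then show "\<bar>coeff p i * x ^ i\<bar> \<le> \<bar>coeff p i\<bar> * max 1 \<bar>x\<bar> ^ degree p"
      by (simp add: abs_mult power_abs mult_left_mono)
  qed
  also have "\<dots> \<le> C * max 1 \<bar>x\<bar> ^ degree p"
    unfolding C_def sum_distrib_right[symmetric] by (intro mult_right_mono) auto
  finally show "\<bar>poly p x\<bar> \<le> C * max 1 \<bar>x\<bar> ^ degree p" .
qed

lemma polynomial_functions_bounded_by_max_power:
  fixes f :: "'i \<Rightarrow> real \<Rightarrow> complex"
  assumes "finite I" and "\<And>i. i \<in> I \<Longrightarrow> polynomial_function (f i)"
  obtains C d where "C \<ge> 1" "\<And>i x. i \<in> I \<Longrightarrow> cmod (f i x) \<le> C * max 1 \<bar>x\<bar> ^ d"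
proof -
  have "real_polynomial_function (\<lambda>x. \<Sum>i\<in>I. (cmod (f i x))\<^sup>2)"
    using assms by (intro real_polynomial_function_sum real_polynomial_function_cmod_power2) auto
  then obtain p where p: "\<And>x. (\<Sum>i\<in>I. (cmod (f i x))\<^sup>2) = poly p x"
    using real_polynomial_function_imp_poly by blast
  obtain C d where "C \<ge> 1" and C: "\<And>x. \<bar>poly p x\<bar> \<le> C * max 1 \<bar>x\<bar> ^ d"
    using poly_bounded_by_max_power[of p] by blast
  have "cmod (f i x) \<le> C * max 1 \<bar>x\<bar> ^ d" if "i \<in> I" for i x
  proof (rule power2_le_imp_le)
    have "1 \<le> C * max 1 \<bar>x\<bar> ^ d"
      using \<open>C \<ge> 1\<close> mult_mono[of 1 C 1 "max 1 \<bar>x\<bar> ^ d"] by simp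
    have "(cmod (f i x))\<^sup>2 \<le> (\<Sum>i\<in>I. (cmod (f i x))\<^sup>2)"
      using that assms(1) by (intro member_le_sum) auto
    also have "\<dots> \<le> C * max 1 \<bar>x\<bar> ^ d"
      using C[of x] by (simp add: p)
    also have "\<dots> \<le> (C * max 1 \<bar>x\<bar> ^ d)\<^sup>2"
      using \<open>1 \<le> C * max 1 \<bar>x\<bar> ^ d\<close> by (simp add: power2_eq_square mult_le_cancel_left1)
    finally show "(cmod (f i x))\<^sup>2 \<le> (C * max 1 \<bar>x\<bar> ^ d)\<^sup>2" .
  qed (use \<open>C \<ge> 1\<close> in simp)
  with \<open>C \<ge> 1\<close> show ?thesis by (rule that)
qed

lemma compact_nonzero_bounded_below:
  fixes f :: "'a::metric_space \<Rightarrow> 'b::real_normed_vector"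
  assumes "compact S" "continuous_on S f" "\<And>x. x \<in> S \<Longrightarrow> f x \<noteq> 0"
  obtains c where "c > 0" "\<And>x. x \<in> S \<Longrightarrow> c \<le> norm (f x)"
proof (cases "S = {}")
  case False
  obtain x0 where "x0 \<in> S" "\<And>x. x \<in> S \<Longrightarrow> norm (f x0) \<le> norm (f x)"
    using continuous_attains_inf[OF assms(1) False continuous_on_norm[OF assms(2)]] by blast
  with assms(3) show ?thesis by (intro that[of "norm (f x0)"]) auto
next
  case True
  then show ?thesis by (intro that[of 1]) auto
qed

lemma poly_lower_bound_near_zero:
  fixes p :: "real poly"
  assumes "p \<noteq> 0" "\<And>x. 0 < \<bar>x\<bar> \<Longrightarrow> \<bar>x\<bar> \<le> 1 \<Longrightarrow> poly p x \<noteq> 0"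
  obtains c m where "c > 0" "\<And>x. \<bar>x\<bar> \<le> 1 \<Longrightarrow> c * \<bar>x\<bar> ^ m \<le> \<bar>poly p x\<bar>"
proof -
  obtain q where q: "p = [:- 0, 1:] ^ order 0 p * q" and "\<not> [:- 0, 1:] dvd q"
    using order_decomp[OF assms(1)] by blast
  then have "poly q 0 \<noteq> 0" by (simp add: poly_eq_0_iff_dvd)
  have pq: "poly p x = x ^ order 0 p * poly q x" for x
    by (subst q) (simp add: poly_power)
  have "poly q x \<noteq> 0" if "x \<in> {-1..1}" for x
    using that assms(2)[of x] \<open>poly q 0 \<noteq> 0\<close> by (cases "x = 0") (auto simp: pq abs_le_iff)
  then obtain c where "c > 0" and c: "\<And>x. x \<in> {-1..1} \<Longrightarrow> c \<le> \<bar>poly q x\<bar>"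
    by (rule compact_nonzero_bounded_below[OF compact_Icc continuous_on_poly[OF continuous_on_id]])
      auto
  have "c * \<bar>x\<bar> ^ order 0 p \<le> \<bar>poly p x\<bar>" if "\<bar>x\<bar> \<le> 1" for x
  proof -
    have "c \<le> \<bar>poly q x\<bar>" using c that by (simp add: abs_le_iff)
    then have "c * \<bar>x\<bar> ^ order 0 p \<le> \<bar>poly q x\<bar> * \<bar>x\<bar> ^ order 0 p"
      by (simp add: mult_right_mono)
    then show ?thesis by (simp add: pq abs_mult power_abs mult.commute)
  qed
  with \<open>c > 0\<close> show ?thesis by (rule that)
qed

lemma poly_lower_bound_at_infinity:
  fixes p :: "real poly"
  assumes "\<And>x. 1 \<le> \<bar>x\<bar> \<Longrightarrow> poly p x \<noteq> 0"
  obtains c where "c > 0" "\<And>x. 1 \<le> \<bar>x\<bar> \<Longrightarrow> c \<le> \<bar>poly p x\<bar>"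
proof -
  have "p \<noteq> 0" using assms[of 1] by auto
  have reflect: "poly (reflect_poly p) (inverse x) = inverse x ^ degree p * poly p x"
    if "x \<noteq> 0" for x
    using that by (simp add: poly_reflect_poly_nz)
  have inverse_in: "inverse x \<in> {-1..1}" if "1 \<le> \<bar>x\<bar>" for x :: real
  proof -
    have "inverse \<bar>x\<bar> \<le> 1" using that by (simp add: inverse_le_1_iff)
    then show ?thesis by (metis abs_le_iff abs_inverse atLeastAtMost_iff minus_le_iff)
  qed
  have "poly (reflect_poly p) t \<noteq> 0" if "t \<in> {-1..1}" for t
  proof (cases "t = 0")
    case False
    then show ?thesis using that reflect[of "inverse t"] assms[of "inverse t"]
      by (simp add: abs_inverse one_le_inverse_iff abs_le_iff)
  qed (simp add: \<open>p \<noteq> 0\<close>)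
  then obtain c where "c > 0" and c: "\<And>t. t \<in> {-1..1} \<Longrightarrow> c \<le> \<bar>poly (reflect_poly p) t\<bar>"
    by (rule compact_nonzero_bounded_below[OF compact_Icc continuous_on_poly[OF continuous_on_id]])
      auto
  have "c \<le> \<bar>poly p x\<bar>" if "1 \<le> \<bar>x\<bar>" for x
  proof -
    have "\<bar>inverse x\<bar> ^ degree p \<le> 1"
      using that by (simp add: power_le_one abs_inverse inverse_le_1_iff)
    then have "\<bar>poly (reflect_poly p) (inverse x)\<bar> \<le> \<bar>poly p x\<bar>"
      using that reflect[of x] by (auto simp: abs_mult power_abs intro: mult_left_le_one_le)
    with c[OF inverse_in[OF that]] show ?thesis by linarith
  qed
  with \<open>c > 0\<close> show ?thesis by (rule that)
qed

section \<open>Determinant estimates\<close>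

lemma norm_power2_vec: "(norm (x::'a::real_normed_vector^'n))\<^sup>2 = (\<Sum>i\<in>UNIV. (norm (x $ i))\<^sup>2)"
  unfolding norm_vec_def L2_set_def by (simp add: sum_nonneg)

lemma norm_det_le_column_bound:
  fixes M :: "'a::real_normed_field^'n^'n" and E V :: real
  assumes "E \<ge> 0" and "\<And>i. norm (M $ i $ k) \<le> V" and "\<And>i j. j \<noteq> k \<Longrightarrow> norm (M $ i $ j) \<le> E"
  shows "norm (det M) \<le> fact CARD('n) * (E ^ (CARD('n) - 1) * V)"
proof -
  have "V \<ge> 0" using assms(2) norm_ge_zero order_trans by blast
  have term_le: "norm (of_int (sign p) * (\<Prod>i\<in>UNIV. M $ i $ p i)) \<le> E ^ (CARD('n) - 1) * V"
    if p: "p permutes UNIV" for p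
  proof -
    obtain i0 where i0: "p i0 = k" by (metis p permutes_univ)
    have "norm (of_int (sign p) * (\<Prod>i\<in>UNIV. M $ i $ p i))
        = norm (M $ i0 $ p i0) * (\<Prod>i\<in>UNIV - {i0}. norm (M $ i $ p i))"
      by (simp add: norm_mult prod_norm[symmetric] sign_def prod.remove)
    also have "\<dots> \<le> V * E ^ (CARD('n) - 1)"
    proof (rule mult_mono)
      have "(\<Prod>i\<in>UNIV - {i0}. norm (M $ i $ p i)) \<le> (\<Prod>i\<in>UNIV - {i0}. E)"
      proof (rule prod_mono)
        fix i assume "i \<in> UNIV - {i0}"
        then have "p i \<noteq> k" using i0 p by (metis DiffE insertI1 permutes_inj injD)
        then show "0 \<le> norm (M $ i $ p i) \<and> norm (M $ i $ p i) \<le> E" using assms(3) by auto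
      qed
      then show "(\<Prod>i\<in>UNIV - {i0}. norm (M $ i $ p i)) \<le> E ^ (CARD('n) - 1)"
        by (simp add: card_Diff_singleton)
    qed (use i0 assms(2) \<open>V \<ge> 0\<close> in \<open>auto intro: prod_nonneg\<close>)
    finally show ?thesis by (simp add: mult.commute)
  qed
  have "norm (det M) \<le> (\<Sum>p | p permutes UNIV. norm (of_int (sign p) * (\<Prod>i\<in>UNIV. M $ i $ p i)))"
    unfolding det_def by (rule norm_sum)
  also have "\<dots> \<le> (\<Sum>p | p permutes (UNIV :: 'n set). E ^ (CARD('n) - 1) * V)"
    using term_le by (intro sum_mono) auto
  also have "\<dots> = fact CARD('n) * (E ^ (CARD('n) - 1) * V)"
    by (simp add: card_permutations)
  finally show ?thesis .
qed

lemma cramer_norm_bound: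
  fixes N :: "'a::real_normed_field^'n^'n" and E :: real
  assumes "E \<ge> 0" and "\<And>i j. norm (N $ i $ j) \<le> E"
  shows "(norm (det N))\<^sup>2 * (norm U)\<^sup>2
    \<le> CARD('n) * (fact CARD('n) * E ^ (CARD('n) - 1))\<^sup>2 * (norm (N *v U))\<^sup>2"
proof -
  let ?b = "fact CARD('n) * E ^ (CARD('n) - 1) * norm (N *v U)"
  let ?Nk = "\<lambda>k. (\<chi> i j. if j = k then (N *v U) $ i else N $ i $ j) :: 'a^'n^'n"
  have "(norm (det N))\<^sup>2 * (norm U)\<^sup>2 = (\<Sum>k\<in>UNIV. (norm (U $ k * det N))\<^sup>2)"
    by (simp add: norm_power2_vec sum_distrib_left norm_mult power_mult_distrib mult.commute)
  also have "\<dots> = (\<Sum>k\<in>UNIV. (norm (det (?Nk k)))\<^sup>2)"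
    by (simp add: cramer_lemma)
  also have "\<dots> \<le> (\<Sum>k\<in>(UNIV::'n set). ?b\<^sup>2)"
  proof (rule sum_mono)
    fix k
    have "norm (det (?Nk k)) \<le> fact CARD('n) * (E ^ (CARD('n) - 1) * norm (N *v U))"
      by (rule norm_det_le_column_bound[OF assms(1)])
        (auto simp: assms(2) Finite_Cartesian_Product.norm_nth_le)
    then show "(norm (det (?Nk k)))\<^sup>2 \<le> ?b\<^sup>2"
      by (simp add: power_mono mult.assoc)
  qed
  also have "\<dots> = CARD('n) * (fact CARD('n) * E ^ (CARD('n) - 1))\<^sup>2 * (norm (N *v U))\<^sup>2"
    by (simp add: power_mult_distrib)
  finally show ?thesis .
qed

lemma full_dim_imp_nonsingular_rows:
  fixes R :: "('a::field^'n) set"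
  assumes "vec.dim R = CARD('n)"
  obtains h where "\<And>i. h i \<in> R" "det (\<chi> i. h i) \<noteq> 0"
proof -
  obtain B where B: "B \<subseteq> R" "vec.independent B" "R \<subseteq> vec.span B"
    using vec.maximal_independent_subset[of R] by blast
  have "card B = CARD('n)"
    using vec.basis_card_eq_dim[OF B(1) B(3) B(2)] assms by simp
  then have "finite B" by (metis card.infinite less_irrefl zero_less_card_finite)
  then obtain h where h: "bij_betw h (UNIV::'n set) B"
    using finite_same_card_bij[OF finite \<open>finite B\<close>] \<open>card B = CARD('n)\<close> by auto
  have "vec.dim R = vec.dim (UNIV :: ('a^'n) set)"
    using assms vec_dim_card[where 'a='a and 'n='n] by simp
  then have "vec.span R = UNIV"
    by (simp add: vec.dim_eq_full[symmetric] vec.dimension_def)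
  then have "vec.span B = UNIV"
    using B(3) vec.span_minimal[OF _ vec.subspace_span] by blast
  moreover have "rows (\<chi> i. h i) = B"
    using h by (auto simp: rows_def row_def bij_betw_def vec_lambda_eta)
  ultimately have "invertible (\<chi> i. h i)"
    using matrix_left_invertible_span_rows_gen invertible_left_inverse by metis
  then show ?thesis using that h B(1) bij_betwE invertible_det_nz by blast
qed

section \<open>Minors of stacked matrices\<close>

text \<open>\<open>\<sigma> i = (j, k)\<close> takes row \<open>j\<close> of block \<open>k\<close>, so \<open>stacked_minor B \<sigma>\<close> ranges over the
  \<open>n \<times> n\<close> matrices formed by rows of the stacked matrix of the blocks \<open>B 0, \<dots>, B K\<close>
  (repeated rows only contribute zero determinants).\<close>

definition stacked_minor :: "(nat \<Rightarrow> 'a::comm_ring_1^'n^'n) \<Rightarrow> ('n \<Rightarrow> 'n \<times> nat) \<Rightarrow> 'a^'n^'n" where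
  "stacked_minor B \<sigma> = (\<chi> i. row (fst (\<sigma> i)) (B (snd (\<sigma> i))))"

definition row_selections :: "nat \<Rightarrow> ('n \<Rightarrow> 'n \<times> nat) set" where
  "row_selections K = {\<sigma>. \<forall>i. snd (\<sigma> i) \<le> K}"

definition minor_sum :: "(nat \<Rightarrow> 'a::real_normed_field^'n^'n) \<Rightarrow> nat \<Rightarrow> real" where
  "minor_sum B K = (\<Sum>\<sigma>\<in>row_selections K. (norm (det (stacked_minor B \<sigma>)))\<^sup>2)"

lemma finite_row_selections: "finite (row_selections K :: ('n::finite \<Rightarrow> 'n \<times> nat) set)"
proof -
  have "row_selections K = (PiE UNIV (\<lambda>_. UNIV \<times> {..K}) :: ('n \<Rightarrow> 'n \<times> nat) set)"
    unfolding row_selections_def PiE_UNIV_domain Pi_def by (auto simp: mem_Times_iff)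
  then show ?thesis by (simp add: finite_PiE)
qed

lemma card_row_selections_pos: "card (row_selections K :: ('n::finite \<Rightarrow> 'n \<times> nat) set) > 0"
proof -
  have "(\<lambda>i. (i, 0)) \<in> (row_selections K :: ('n \<Rightarrow> 'n \<times> nat) set)"
    by (simp add: row_selections_def)
  then show ?thesis using finite_row_selections card_gt_0_iff by blast
qed

lemma minor_sum_pos:
  fixes B :: "nat \<Rightarrow> 'a::real_normed_field^'n^'n"
  assumes "vec.dim {row j (B k) | j k. k \<le> K} = CARD('n)"
  shows "minor_sum B K > 0"
proof -
  obtain h where h: "\<And>i. h i \<in> {row j (B k) | j k. k \<le> K}" and "det (\<chi> i. h i) \<noteq> 0"
    using full_dim_imp_nonsingular_rows[OF assms] by blast
  then have "\<forall>i. \<exists>jk. snd jk \<le> K \<and> h i = row (fst jk) (B (snd jk))"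
    by force
  then obtain \<sigma> where \<sigma>: "\<And>i. snd (\<sigma> i) \<le> K \<and> h i = row (fst (\<sigma> i)) (B (snd (\<sigma> i)))"
    by metis
  then have "\<sigma> \<in> row_selections K" and "stacked_minor B \<sigma> = (\<chi> i. h i)"
    by (simp_all add: row_selections_def stacked_minor_def)
  then have "0 < (norm (det (stacked_minor B \<sigma>)))\<^sup>2"
    using \<open>det (\<chi> i. h i) \<noteq> 0\<close> by simp
  also have "\<dots> \<le> minor_sum B K"
    unfolding minor_sum_def using \<open>\<sigma> \<in> row_selections K\<close> finite_row_selections
    by (intro member_le_sum) auto
  finally show ?thesis .
qed

lemma norm_stacked_minor_mult_le:
  fixes B :: "nat \<Rightarrow> 'a::real_normed_field^'n^'n"
  assumes "\<sigma> \<in> row_selections K"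
  shows "(norm (stacked_minor B \<sigma> *v U))\<^sup>2 \<le> CARD('n) * (\<Sum>k\<le>K. (norm (B k *v U))\<^sup>2)"
proof -
  have "(norm (stacked_minor B \<sigma> *v U))\<^sup>2
      = (\<Sum>i\<in>UNIV. (norm ((B (snd (\<sigma> i)) *v U) $ fst (\<sigma> i)))\<^sup>2)"
    by (simp add: norm_power2_vec stacked_minor_def row_def matrix_vector_mult_def)
  also have "\<dots> \<le> (\<Sum>i\<in>(UNIV::'n set). \<Sum>k\<le>K. (norm (B k *v U))\<^sup>2)"
  proof (rule sum_mono)
    fix i
    have "snd (\<sigma> i) \<in> {..K}" using assms by (simp add: row_selections_def)
    then have "(norm (B (snd (\<sigma> i)) *v U))\<^sup>2 \<le> (\<Sum>k\<le>K. (norm (B k *v U))\<^sup>2)"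
      by (intro member_le_sum) auto
    then show "(norm ((B (snd (\<sigma> i)) *v U) $ fst (\<sigma> i)))\<^sup>2 \<le> (\<Sum>k\<le>K. (norm (B k *v U))\<^sup>2)"
      by (meson Finite_Cartesian_Product.norm_nth_le norm_ge_zero order_trans power_mono)
  qed
  finally show ?thesis by simp
qed

lemma minor_sum_estimate:
  fixes B :: "nat \<Rightarrow> 'a::real_normed_field^'n^'n" and E :: real
  assumes "E \<ge> 0" and "\<And>k i j. k \<le> K \<Longrightarrow> norm (B k $ i $ j) \<le> E"
  shows "minor_sum B K * (norm U)\<^sup>2 \<le> card (row_selections K :: ('n \<Rightarrow> 'n \<times> nat) set)
    * (CARD('n) * fact CARD('n) * E ^ (CARD('n) - 1))\<^sup>2 * (\<Sum>k\<le>K. (norm (B k *v U))\<^sup>2)"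
proof -
  let ?Q = "\<Sum>k\<le>K. (norm (B k *v U))\<^sup>2"
  have "(norm (det (stacked_minor B \<sigma>)))\<^sup>2 * (norm U)\<^sup>2
      \<le> (CARD('n) * fact CARD('n) * E ^ (CARD('n) - 1))\<^sup>2 * ?Q"
    if "\<sigma> \<in> row_selections K" for \<sigma>
  proof -
    have "\<And>i j. norm (stacked_minor B \<sigma> $ i $ j) \<le> E"
      using that assms(2) by (simp add: stacked_minor_def row_def row_selections_def)
    then have "(norm (det (stacked_minor B \<sigma>)))\<^sup>2 * (norm U)\<^sup>2
        \<le> CARD('n) * (fact CARD('n) * E ^ (CARD('n) - 1))\<^sup>2 * (norm (stacked_minor B \<sigma> *v U))\<^sup>2"
      by (rule cramer_norm_bound[OF assms(1)])
    also have "\<dots> \<le> CARD('n) * (fact CARD('n) * E ^ (CARD('n) - 1))\<^sup>2 * (CARD('n) * ?Q)"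
      using norm_stacked_minor_mult_le[OF that] by (intro mult_left_mono) auto
    finally show ?thesis by (simp add: power_mult_distrib power2_eq_square mult_ac)
  qed
  then have "minor_sum B K * (norm U)\<^sup>2
      \<le> (\<Sum>\<sigma>\<in>(row_selections K :: ('n \<Rightarrow> 'n \<times> nat) set).
            (CARD('n) * fact CARD('n) * E ^ (CARD('n) - 1))\<^sup>2 * ?Q)"
    unfolding minor_sum_def sum_distrib_right by (intro sum_mono) auto
  then show ?thesis by simp
qed

lemma real_polynomial_function_minor_sum:
  fixes B :: "nat \<Rightarrow> real \<Rightarrow> complex^'n^'n"
  assumes "\<And>k i j. polynomial_function (\<lambda>x. B k x $ i $ j)"
  shows "real_polynomial_function (\<lambda>x. minor_sum (\<lambda>k. B k x) K)"
  unfolding minor_sum_def using finite_row_selections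
  by (intro real_polynomial_function_sum real_polynomial_function_cmod_power2 polynomial_function_det)
     (auto simp: stacked_minor_def row_def assms)

lemma minor_sum_polynomial_bound:
  fixes B :: "nat \<Rightarrow> real \<Rightarrow> complex^'n^'n"
  assumes "\<And>k i j. polynomial_function (\<lambda>x. B k x $ i $ j)"
  obtains C e where "C > 0"
    "\<And>x U. minor_sum (\<lambda>k. B k x) K * (norm U)\<^sup>2
      \<le> C * max 1 \<bar>x\<bar> ^ e * (\<Sum>k\<le>K. (norm (B k x *v U))\<^sup>2)"
proof -
  obtain C0 d where "C0 \<ge> 1" and C0: "\<And>t x. t \<in> {..K} \<times> UNIV \<times> UNIV \<Longrightarrow>
      cmod (B (fst t) x $ fst (snd t) $ snd (snd t)) \<le> C0 * max 1 \<bar>x\<bar> ^ d"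
    using polynomial_functions_bounded_by_max_power[of "{..K} \<times> UNIV \<times> UNIV"
        "\<lambda>t x. B (fst t) x $ fst (snd t) $ snd (snd t)"]
    by (auto simp: assms)
  let ?n = "CARD('n)" and ?S = "card (row_selections K :: ('n \<Rightarrow> 'n \<times> nat) set)"
  define C where "C = ?S * (?n * fact ?n * C0 ^ (?n - 1))\<^sup>2"
  have "C > 0"
    unfolding C_def using card_row_selections_pos[where 'n='n, of K] \<open>C0 \<ge> 1\<close>
    by (simp add: zero_less_mult_iff)
  moreover have "minor_sum (\<lambda>k. B k x) K * (norm U)\<^sup>2
      \<le> C * max 1 \<bar>x\<bar> ^ (2 * d * (?n - 1)) * (\<Sum>k\<le>K. (norm (B k x *v U))\<^sup>2)" for x U
  proof -
    have "0 \<le> C0 * max 1 \<bar>x\<bar> ^ d" using \<open>C0 \<ge> 1\<close> by simp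
    moreover have "((max 1 \<bar>x\<bar> ^ d) ^ (?n - 1))\<^sup>2 = max 1 \<bar>x\<bar> ^ (2 * d * (?n - 1))"
      by (simp add: power_mult[symmetric] mult_ac)
    ultimately show ?thesis
      using minor_sum_estimate[of "C0 * max 1 \<bar>x\<bar> ^ d" K "\<lambda>k. B k x" U]
        C0[of "(k, i, j)" x for k i j]
      by (simp add: C_def power_mult_distrib mult_ac)
  qed
  ultimately show ?thesis by (rule that)
qed

lemma poly_pos_lower_bounds:
  fixes p :: "real poly"
  assumes pos: "\<And>x. x \<noteq> 0 \<Longrightarrow> poly p x > 0"
  obtains c m where "c > 0"
    "\<And>x. 0 < \<bar>x\<bar> \<Longrightarrow> \<bar>x\<bar> \<le> 1 \<Longrightarrow> c * \<bar>x\<bar> ^ m \<le> poly p x"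
    "\<And>x. 1 \<le> \<bar>x\<bar> \<Longrightarrow> c \<le> poly p x"
proof -
  have "p \<noteq> 0"
    using pos[of 1] by auto
  have "poly p x \<noteq> 0" if "0 < \<bar>x\<bar>" "\<bar>x\<bar> \<le> 1" for x
    using pos[of x] that by auto
  with \<open>p \<noteq> 0\<close> obtain c1 m where "c1 > 0"
    and c1: "\<And>x. \<bar>x\<bar> \<le> 1 \<Longrightarrow> c1 * \<bar>x\<bar> ^ m \<le> \<bar>poly p x\<bar>"
    by (rule poly_lower_bound_near_zero) auto
  have "poly p x \<noteq> 0" if "1 \<le> \<bar>x\<bar>" for x
    using pos[of x] that by (cases "x = 0") simp_all
  then obtain c2 where "c2 > 0" and c2: "\<And>x. 1 \<le> \<bar>x\<bar> \<Longrightarrow> c2 \<le> \<bar>poly p x\<bar>"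
    by (rule poly_lower_bound_at_infinity) auto
  have "min c1 c2 * \<bar>x\<bar> ^ m \<le> poly p x" if "0 < \<bar>x\<bar>" "\<bar>x\<bar> \<le> 1" for x
  proof -
    have "min c1 c2 * \<bar>x\<bar> ^ m \<le> c1 * \<bar>x\<bar> ^ m"
      by (simp add: mult_right_mono)
    also have "\<dots> \<le> poly p x"
      using c1[OF that(2)] pos[of x] that by auto
    finally show ?thesis .
  qed
  moreover have "min c1 c2 \<le> poly p x" if "1 \<le> \<bar>x\<bar>" for x
    using c2[OF that] pos[of x] that by (cases "x = 0") auto
  ultimately show ?thesis
    using \<open>c1 > 0\<close> \<open>c2 > 0\<close> by (intro that[of "min c1 c2" m]) auto
qed

lemma polynomial_full_rank_observability:
  fixes B :: "nat \<Rightarrow> real \<Rightarrow> complex^'n^'n"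
  assumes poly: "\<And>k i j. polynomial_function (\<lambda>x. B k x $ i $ j)"
    and rank: "\<And>x. x \<noteq> 0 \<Longrightarrow> vec.dim {row j (B k x) | j k. k \<le> K} = CARD('n)"
  obtains c e m where "c > 0"
    "\<And>x U. 1 \<le> \<bar>x\<bar> \<Longrightarrow> c * (norm U)\<^sup>2 \<le> \<bar>x\<bar> ^ e * (\<Sum>k\<le>K. (norm (B k x *v U))\<^sup>2)"
    "\<And>x U. 0 < \<bar>x\<bar> \<Longrightarrow> \<bar>x\<bar> \<le> 1 \<Longrightarrow>
      c * \<bar>x\<bar> ^ m * (norm U)\<^sup>2 \<le> (\<Sum>k\<le>K. (norm (B k x *v U))\<^sup>2)"
proof -
  let ?D = "\<lambda>x. minor_sum (\<lambda>k. B k x) K"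
  let ?Q = "\<lambda>x U. \<Sum>k\<le>K. (norm (B k x *v U))\<^sup>2"
  have "real_polynomial_function ?D"
    using poly by (rule real_polynomial_function_minor_sum)
  then obtain p where p: "\<And>x. ?D x = poly p x"
    using real_polynomial_function_imp_poly by blast
  have "poly p x > 0" if "x \<noteq> 0" for x
    using minor_sum_pos[OF rank[OF that]] by (simp add: p)
  then obtain c0 m where "c0 > 0"
    and near_zero: "\<And>x. 0 < \<bar>x\<bar> \<Longrightarrow> \<bar>x\<bar> \<le> 1 \<Longrightarrow> c0 * \<bar>x\<bar> ^ m \<le> ?D x"
    and at_infinity: "\<And>x. 1 \<le> \<bar>x\<bar> \<Longrightarrow> c0 \<le> ?D x"
    unfolding p by (rule poly_pos_lower_bounds) auto
  obtain C e where "C > 0"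
    and C: "\<And>x U. ?D x * (norm U)\<^sup>2 \<le> C * max 1 \<bar>x\<bar> ^ e * ?Q x U"
    using poly by (rule minor_sum_polynomial_bound[where B = B and K = K]) auto
  have "c0 / C > 0"
    using \<open>c0 > 0\<close> \<open>C > 0\<close> by simp
  moreover have "c0 / C * (norm U)\<^sup>2 \<le> \<bar>x\<bar> ^ e * ?Q x U" if "1 \<le> \<bar>x\<bar>" for x U
  proof -
    have "c0 * (norm U)\<^sup>2 \<le> ?D x * (norm U)\<^sup>2"
      using at_infinity[OF that] by (rule mult_right_mono) simp
    also have "\<dots> \<le> C * (\<bar>x\<bar> ^ e * ?Q x U)"
      using C[of x U] max_absorb2[OF that] by (simp add: mult.assoc)
    finally show ?thesis
      using \<open>C > 0\<close> by (simp add: field_simps)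
  qed
  moreover have "c0 / C * \<bar>x\<bar> ^ m * (norm U)\<^sup>2 \<le> ?Q x U"
    if "0 < \<bar>x\<bar>" "\<bar>x\<bar> \<le> 1" for x U
  proof -
    have "c0 * \<bar>x\<bar> ^ m * (norm U)\<^sup>2 \<le> ?D x * (norm U)\<^sup>2"
      using near_zero[OF that] by (rule mult_right_mono) simp
    also have "\<dots> \<le> C * ?Q x U"
      using C[of x U] max_absorb1[OF that(2)] by simp
    finally show ?thesis
      using \<open>C > 0\<close> by (simp add: field_simps)
  qed
  ultimately show ?thesis
    by (rule that)
qed

section \<open>The Kalman estimate\<close>

lemma polynomial_function_symb: "polynomial_function (\<lambda>\<xi>. symb A Ba \<xi> $ i $ j)"
proof -
  have "polynomial_function (\<lambda>\<xi>::real. complex_of_real \<xi>)"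
    by (intro polynomial_function_bounded_linear bounded_linear_of_real)
  then show ?thesis
    by (auto simp: symb_def cmat_def intro!: polynomial_function_add polynomial_function_complex_mult)
qed

lemma polynomial_function_kalman_block:
  "polynomial_function (\<lambda>\<xi>. (cmat Bs ** matpow (symb A Ba \<xi>) k) $ i $ j)"
  by (intro polynomial_function_matrix_mult polynomial_function_matpow polynomial_function_symb) auto

lemma sum_powi_weighted_lower_bound:
  fixes t :: real and q :: "nat \<Rightarrow> real"
  assumes "1 \<le> t" and "\<And>k. 0 \<le> q k" and "a \<le> t ^ e * (\<Sum>k\<le>K. q k)"
  shows "t powi (- 2 * int (K + e)) * a \<le> (\<Sum>k\<le>K. t powi (- 2 * int k) * q k)"
proof -
  have "t powi (- 2 * int (K + e)) * a
      \<le> t powi (- 2 * int (K + e)) * (t ^ e * (\<Sum>k\<le>K. q k))"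
    using assms(1,3) by (intro mult_left_mono) auto
  also have "\<dots> = t powi (- 2 * int K - int e) * (\<Sum>k\<le>K. q k)"
  proof -
    have "t powi (- 2 * int K - int e) = t powi (- 2 * int (K + e) + int e)"
      by (rule arg_cong[where f = "power_int t"]) simp
    also have "\<dots> = t powi (- 2 * int (K + e)) * t ^ e"
      using assms(1) by (subst power_int_add) auto
    finally show ?thesis by (simp add: mult.assoc)
  qed
  also have "\<dots> \<le> (\<Sum>k\<le>K. t powi (- 2 * int k) * q k)"
    unfolding sum_distrib_left
    using assms(1,2) by (intro sum_mono mult_right_mono power_int_increasing) auto
  finally show ?thesis .
qed

theorem mainTheorem1:
  fixes A Ba Bs :: "real^'n^'n" and K :: nat
  assumes "CARD('n) \<ge> 2"
    and "transpose A = A"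
    and "transpose Ba = - Ba"
    and "transpose Bs = Bs"
    and "K \<ge> 1"
    and "kalman_rank_condition Bs A Ba K"
  shows "\<exists>(\<alpha>::nat) (\<beta>::nat) (c::real). c > 0 \<and>
    (\<forall>U::complex^'n.
      (\<forall>\<xi>::real. \<bar>\<xi>\<bar> \<ge> 1 \<longrightarrow>
         (\<Sum>k\<le>K. \<bar>\<xi>\<bar> powi (- 2 * int k) * (norm (cmat Bs *v (matpow (symb A Ba \<xi>) k *v U)))\<^sup>2)
           \<ge> c * \<bar>\<xi>\<bar> powi (- 2 * int \<alpha>) * (norm U)\<^sup>2) \<and>
      (\<forall>\<xi>::real. 0 < \<bar>\<xi>\<bar> \<and> \<bar>\<xi>\<bar> \<le> 1 \<longrightarrow>
         (\<Sum>k\<le>K. (norm (cmat Bs *v (matpow (symb A Ba \<xi>) k *v U)))\<^sup>2)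
           \<ge> c * \<bar>\<xi>\<bar> ^ (2 * \<beta>) * (norm U)\<^sup>2))"
proof -
  define B where "B k \<xi> = cmat Bs ** matpow (symb A Ba \<xi>) k" for k \<xi>
  have B_mult: "cmat Bs *v (matpow (symb A Ba \<xi>) k *v U) = B k \<xi> *v U" for \<xi> k U
    by (simp add: B_def matrix_vector_mul_assoc)
  obtain c e m where "c > 0"
    and large: "\<And>\<xi> U. 1 \<le> \<bar>\<xi>\<bar> \<Longrightarrow>
      c * (norm U)\<^sup>2 \<le> \<bar>\<xi>\<bar> ^ e * (\<Sum>k\<le>K. (norm (B k \<xi> *v U))\<^sup>2)"
    and small: "\<And>\<xi> U. 0 < \<bar>\<xi>\<bar> \<Longrightarrow> \<bar>\<xi>\<bar> \<le> 1 \<Longrightarrow>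
      c * \<bar>\<xi>\<bar> ^ m * (norm U)\<^sup>2 \<le> (\<Sum>k\<le>K. (norm (B k \<xi> *v U))\<^sup>2)"
    by (rule polynomial_full_rank_observability[where B = B and K = K])
      (use assms(6) in \<open>auto simp: B_def polynomial_function_kalman_block
        kalman_rank_condition_def stacked_rank_def\<close>)
  show ?thesis
  proof (intro exI conjI allI impI)
    fix U :: "complex^'n" and \<xi> :: real
    assume "1 \<le> \<bar>\<xi>\<bar>"
    from sum_powi_weighted_lower_bound[OF this _ large[OF this]]
    show "c * \<bar>\<xi>\<bar> powi (- 2 * int (K + e)) * (norm U)\<^sup>2
      \<le> (\<Sum>k\<le>K. \<bar>\<xi>\<bar> powi (- 2 * int k) * (norm (cmat Bs *v (matpow (symb A Ba \<xi>) k *v U)))\<^sup>2)"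
      by (simp add: B_mult mult_ac)
  next
    fix U :: "complex^'n" and \<xi> :: real
    assume \<xi>: "0 < \<bar>\<xi>\<bar> \<and> \<bar>\<xi>\<bar> \<le> 1"
    then have "c * \<bar>\<xi>\<bar> ^ (2 * m) * (norm U)\<^sup>2 \<le> c * \<bar>\<xi>\<bar> ^ m * (norm U)\<^sup>2"
      using \<open>c > 0\<close> by (intro mult_right_mono mult_left_mono power_decreasing) auto
    with small[of \<xi> U] \<xi> show "c * \<bar>\<xi>\<bar> ^ (2 * m) * (norm U)\<^sup>2
      \<le> (\<Sum>k\<le>K. (norm (cmat Bs *v (matpow (symb A Ba \<xi>) k *v U)))\<^sup>2)"
      by (simp add: B_mult)
  qed (rule \<open>c > 0\<close>)
qed

end
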